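(* Let $\lambda,\mu,\nu$ be partitions of the same integer with $\ell(\lambda)\le 4$, $\ell(\mu),\ell(\nu)\le 2$, and $\mu_2\ge\nu_2$. If (1) $\lambda_3+\lambda_4\le\nu_2\le\lambda_2+\lambda_4$, and (2) $(\lambda_3+\lambda_4)+(\lambda_2+\lambda_4)\le\mu_2+\nu_2\le(\lambda_3+\lambda_4)+\min(\lambda_2+\lambda_3,\lambda_1+\lambda_4)$, then $g_{\mu,\nu,\lambda}=\tilde g_{\mu,\nu,\lambda}$. In particular, when $\lambda_2+\lambda_3\le\lambda_1+\lambda_4$, the chain of inequalities $$\lambda_4\le\mu_2+\nu_2-(\lambda_2+\lambda_3+\lambda_4)\le\lambda_3\le\nu_2-\lambda_4\le\lambda_2$$ is sufficient for $g_{\mu,\nu,\lambda}=\tilde g_{\mu,\nu,\lambda}$.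
   Context: Partitions are padded with zero parts. The Kronecker coefficient $g_{\mu,\nu,\lambda}$ (for $\ell(\mu),\ell(\nu)\le2$, $\ell(\lambda)\le4$, same weight) is defined by $s_\lambda(x_1y_1,x_1y_2,x_2y_1,x_2y_2)=\sum_{\mu,\nu}g_{\mu,\nu,\lambda}\,s_\mu(x_1,x_2)s_\nu(y_1,y_2)$, with $s$ the Schur polynomials. For integers $n,m$, $p_S(n,m)$ is the number of $(x_1,\dots,x_4)\in\mathbb{Z}_{\ge0}^4$ with $x_1+x_3+x_4=n$, $x_2+x_3+2x_4=m$ (zero if $n<0$ or $m<0$). The atomic Kronecker coefficient is $\tilde g_{\mu,\nu,\lambda}:=p_S(\nu_2-\lambda_3-\lambda_4,\ \mu_2+\nu_2-\lambda_2-\lambda_3-2\lambda_4)$; equivalently, it is the coefficient of $x^{\mu_2-\lambda_2-\lambda_4}y^{\nu_2-\lambda_3-\lambda_4}$ in the Laurent expansion of $1/((1-y/x)(1-xy)(1-x)(1-y))$ in the domain $0<|xy|<|y|<|x|<1$. *)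

theory Defs
  imports Main
begin

text \<open>Partitions are nat lists (padded with zero parts). Young diagram cells are
  pairs (row, column), both indexed from 0.\<close>

definition cells :: "nat list \<Rightarrow> (nat \<times> nat) set" where
  "cells sh = {(i, j). i < length sh \<and> j < sh ! i}"

text \<open>Semistandard Young tableaux of shape sh with entries in {0..<n}
  (entry k stands for variable z_(k+1)); extended by 0 outside the diagram.\<close>

definition ssyt :: "nat list \<Rightarrow> nat \<Rightarrow> ((nat \<times> nat) \<Rightarrow> nat) set" where
  "ssyt sh n = {T. (\<forall>c. c \<notin> cells sh \<longrightarrow> T c = 0)
      \<and> (\<forall>c \<in> cells sh. T c < n)
      \<and> (\<forall>i j. (i, Suc j) \<in> cells sh \<longrightarrow> T (i, j) \<le> T (i, Suc j))
      \<and> (\<forall>i j. (Suc i, j) \<in> cells sh \<longrightarrow> T (i, j) < T (Suc i, j))}"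

text \<open>Coefficient of the monomial z_1^(a!0) ... z_n^(a!(n-1)) (n = length a) in the
  Schur polynomial s_sh(z_1,...,z_n) = sum over SSYT T of z^(content T).\<close>

definition schur_coeff :: "nat list \<Rightarrow> nat list \<Rightarrow> nat" where
  "schur_coeff sh a = card {T \<in> ssyt sh (length a).
      \<forall>k < length a. card {c \<in> cells sh. T c = k} = a ! k}"

text \<open>Coefficient of x1^p x2^q y1^r y2^s in s_lam(x1y1, x1y2, x2y1, x2y2).\<close>

definition kron_lhs :: "nat list \<Rightarrow> nat \<Rightarrow> nat \<Rightarrow> nat \<Rightarrow> nat \<Rightarrow> int" where
  "kron_lhs lam p q r s =
     (\<Sum>(a0, a1, a2, a3) \<in> {(a0, a1, a2, a3) \<in> {..p} \<times> {..p} \<times> {..q} \<times> {..q}.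
          a0 + a1 = p \<and> a2 + a3 = q \<and> a0 + a2 = r \<and> a1 + a3 = s}.
        int (schur_coeff lam [a0, a1, a2, a3]))"

text \<open>Coefficient of x1^p x2^q y1^r y2^s in
  sum over mu, nu (length \<le> 2, weight w) of G mu_2 nu_2 * s_mu(x1,x2) s_nu(y1,y2);
  the partitions of weight w with at most 2 parts are (w - i, i) with 2 i \<le> w.\<close>

definition kron_rhs :: "nat \<Rightarrow> (nat \<Rightarrow> nat \<Rightarrow> int) \<Rightarrow> nat \<Rightarrow> nat \<Rightarrow> nat \<Rightarrow> nat \<Rightarrow> int" where
  "kron_rhs w G p q r s =
     (\<Sum>i \<in> {i. 2 * i \<le> w}. \<Sum>j \<in> {j. 2 * j \<le> w}.
        G i j * int (schur_coeff [w - i, i] [p, q]) * int (schur_coeff [w - j, j] [r, s]))"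

text \<open>The family of Kronecker coefficients g_{(w-i,i),(w-j,j),lam}, indexed by (i, j),
  defined as the (unique) coefficients of the expansion.\<close>

definition kron_family :: "nat list \<Rightarrow> nat \<Rightarrow> nat \<Rightarrow> int" where
  "kron_family lam = (THE G. (\<forall>i j. \<not> (2 * i \<le> sum_list lam \<and> 2 * j \<le> sum_list lam) \<longrightarrow> G i j = 0)
      \<and> (\<forall>p q r s. kron_lhs lam p q r s = kron_rhs (sum_list lam) G p q r s))"

definition kron :: "nat list \<Rightarrow> nat list \<Rightarrow> nat list \<Rightarrow> int" where
  "kron mu nu lam = kron_family lam (mu ! 1) (nu ! 1)"

definition pS :: "int \<Rightarrow> int \<Rightarrow> nat" where
  "pS n m = (if n < 0 \<or> m < 0 then 0 else
     card {(x1 :: nat, x2 :: nat, x3 :: nat, x4 :: nat).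
        int x1 + int x3 + int x4 = n \<and> int x2 + int x3 + 2 * int x4 = m})"

definition atomic_kron :: "nat list \<Rightarrow> nat list \<Rightarrow> nat list \<Rightarrow> int" where
  "atomic_kron mu nu lam = int (pS (int (nu ! 1) - int (lam ! 2) - int (lam ! 3))
      (int (mu ! 1) + int (nu ! 1) - int (lam ! 1) - int (lam ! 2) - 2 * int (lam ! 3)))"

end

theory Submission
  imports Defs
begin

text \<open>The coefficient of \<open>x1^p x2^q y1^r y2^s\<close> in \<open>s_\<lambda>(x1 y1, x1 y2, x2 y1, x2 y2)\<close> counts
  Gelfand--Tsetlin patterns with top row \<open>\<lambda>\<close> of bidegree \<open>(p, q, r, s)\<close>. The Bender--Knuth
  involutions make this count symmetric in \<open>p, q\<close> and in \<open>r, s\<close>, so it is a function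
  \<open>F(min p q, min r s)\<close>. Since \<open>s_(w-i,i)(x1, x2)\<close> contains \<open>x1^p x2^q\<close> (once) exactly when
  \<open>i \<le> min p q\<close>, \<open>F\<close> is the rectangle sum of the Kronecker coefficients, which are therefore the
  mixed second differences of \<open>F\<close>. Grouping patterns by their second row \<open>(a, b, c)\<close>, each
  fibre is an interval; in the region of the theorem its length near \<open>(\<mu>2, \<nu>2)\<close> is a truncated
  linear function whose mixed difference is the indicator of \<open>a + b + 2 c = \<mu>2 + \<nu>2\<close>,
  \<open>b + c \<le> \<nu>2\<close>. Counting these \<open>(a, b, c)\<close> gives \<open>p_S\<close>.\<close>

lemma finite_down_closed_eq_lessThan:
  fixes A :: "nat set"
  assumes fin: "finite A" and down: "\<And>x y. x \<in> A \<Longrightarrow> y \<le> x \<Longrightarrow> y \<in> A"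
  shows "A = {..<card A}"
proof -
  have "A \<subseteq> {..<card A}"
  proof
    fix x assume "x \<in> A"
    then have "{..x} \<subseteq> A" using down by auto
    then have "card {..x} \<le> card A" by (rule card_mono[OF fin])
    then show "x \<in> {..<card A}" by simp
  qed
  then show ?thesis by (rule card_subset_eq[OF finite_lessThan]) simp
qed

lemma mono_less_iff_less_card:
  fixes g :: "nat \<Rightarrow> 'a::linorder"
  assumes mono: "\<And>j. Suc j < L \<Longrightarrow> g j \<le> g (Suc j)" and "c < L"
  shows "g c < k \<longleftrightarrow> c < card {c. c < L \<and> g c < k}"
proof -
  have "{c. c < L \<and> g c < k} = {..<card {c. c < L \<and> g c < k}}"
  proof (rule finite_down_closed_eq_lessThan)
    fix x y assume x: "x \<in> {c. c < L \<and> g c < k}" and "y \<le> x"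
    have "{y..<x} \<subseteq> {j. Suc j < L}" using x by auto
    then have "g y \<le> g x"
      using lift_Suc_mono_le_ivl[where N = "{j. Suc j < L}"] mono \<open>y \<le> x\<close> by blast
    then show "y \<in> {c. c < L \<and> g c < k}" using x \<open>y \<le> x\<close> by auto
  qed simp
  then show ?thesis using \<open>c < L\<close> by blast
qed

lemma card_filter_bij_betw:
  assumes "bij_betw f A B"
  shows "card {x \<in> A. P (f x)} = card {y \<in> B. P y}"
proof (rule bij_betw_same_card, rule bij_betw_subset[OF assms])
  show "f ` {x \<in> A. P (f x)} = {y \<in> B. P y}"
    using assms unfolding bij_betw_def by auto
qed auto

lemma card_four_rows:
  assumes "finite A0" "finite A1" "finite A2" "finite A3"
  shows "card {(i, c). (i = (0::nat) \<and> c \<in> A0) \<or> (i = 1 \<and> c \<in> A1) \<or> (i = 2 \<and> c \<in> A2) \<or> (i = 3 \<and> c \<in> A3)}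
     = card A0 + card A1 + card A2 + card A3"
proof -
  have "{(i, c). (i = (0::nat) \<and> c \<in> A0) \<or> (i = 1 \<and> c \<in> A1) \<or> (i = 2 \<and> c \<in> A2) \<or> (i = 3 \<and> c \<in> A3)}
      = ({0} \<times> A0 \<union> {1} \<times> A1) \<union> ({2} \<times> A2 \<union> {3} \<times> A3)" by auto
  also have "card \<dots> = card ({0::nat} \<times> A0 \<union> {1} \<times> A1) + card ({2::nat} \<times> A2 \<union> {3} \<times> A3)"
    by (rule card_Un_disjoint) (auto simp: assms)
  also have "\<dots> = card A0 + card A1 + card A2 + card A3"
    by (subst (1 2) card_Un_disjoint) (auto simp: assms card_cartesian_product)
  finally show ?thesis .
qed

section \<open>Semistandard tableaux\<close>

definition row_count :: "nat list \<Rightarrow> (nat \<times> nat \<Rightarrow> nat) \<Rightarrow> nat \<Rightarrow> nat \<Rightarrow> nat" where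
  "row_count sh T k i = card {c. c < sh ! i \<and> T (i, c) < k}"

lemma ssyt_row_mono:
  "T \<in> ssyt sh n \<Longrightarrow> (i, Suc j) \<in> cells sh \<Longrightarrow> T (i, j) \<le> T (i, Suc j)"
  by (simp add: ssyt_def)

lemma ssyt_column_strict:
  "T \<in> ssyt sh n \<Longrightarrow> (Suc i, j) \<in> cells sh \<Longrightarrow> T (i, j) < T (Suc i, j)"
  by (simp add: ssyt_def)

lemma ssyt_less:
  "T \<in> ssyt sh n \<Longrightarrow> c \<in> cells sh \<Longrightarrow> T c < n"
  by (simp add: ssyt_def)

lemma ssyt_outside:
  "T \<in> ssyt sh n \<Longrightarrow> c \<notin> cells sh \<Longrightarrow> T c = 0"
  unfolding ssyt_def by blast

lemma ssyt_less_iff_less_row_count: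
  assumes T: "T \<in> ssyt sh n" and "i < length sh" "c < sh ! i"
  shows "T (i, c) < k \<longleftrightarrow> c < row_count sh T k i"
  unfolding row_count_def
  by (rule mono_less_iff_less_card) (use ssyt_row_mono[OF T] assms in \<open>auto simp: cells_def\<close>)

lemma row_count_le: "row_count sh T k i \<le> sh ! i"
proof -
  have "row_count sh T k i \<le> card {..<sh ! i}"
    unfolding row_count_def by (rule card_mono) auto
  then show ?thesis by simp
qed

lemma row_count_mono: "k \<le> k' \<Longrightarrow> row_count sh T k i \<le> row_count sh T k' i"
  unfolding row_count_def by (rule card_mono) auto

lemma row_count_ssyt_full:
  assumes "T \<in> ssyt sh n" "i < length sh"
  shows "row_count sh T n i = sh ! i"
proof -
  have "{c. c < sh ! i \<and> T (i, c) < n} = {..<sh ! i}"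
    using ssyt_less[OF assms(1)] assms(2) by (auto simp: cells_def)
  then show ?thesis unfolding row_count_def by simp
qed

text \<open>Interlacing: by column strictness, a cell of row \<open>i + 1\<close> with entry \<open>\<le> k\<close> lies below a cell
  of row \<open>i\<close> with entry \<open>< k\<close>.\<close>

lemma row_count_interlace:
  assumes T: "T \<in> ssyt sh n" and "Suc i < length sh" "sh ! Suc i \<le> sh ! i"
  shows "row_count sh T (Suc k) (Suc i) \<le> row_count sh T k i"
  unfolding row_count_def
proof (rule card_mono)
  show "{c. c < sh ! Suc i \<and> T (Suc i, c) < Suc k} \<subseteq> {c. c < sh ! i \<and> T (i, c) < k}"
  proof
    fix c assume c: "c \<in> {c. c < sh ! Suc i \<and> T (Suc i, c) < Suc k}"
    then have "T (i, c) < T (Suc i, c)"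
      using ssyt_column_strict[OF T] assms(2) by (simp add: cells_def)
    then show "c \<in> {c. c < sh ! i \<and> T (i, c) < k}" using c assms(3) by auto
  qed
qed simp

section \<open>Two-row Schur polynomials\<close>

definition two_row_tableau :: "nat \<Rightarrow> nat \<Rightarrow> nat \<Rightarrow> nat \<times> nat \<Rightarrow> nat" where
  "two_row_tableau L0 L1 N = (\<lambda>(i, c).
     if i = 0 \<and> c < L0 then (if c < N then 0 else 1) else if i = 1 \<and> c < L1 then 1 else 0)"

lemma cells_two_rows: "cells [L0, L1] = {(i, c). (i = 0 \<and> c < L0) \<or> (i = 1 \<and> c < L1)}"
  by (auto simp: cells_def less_Suc_eq numeral_eq_Suc)

lemma two_row_tableau_in_ssyt:
  "L1 \<le> N \<Longrightarrow> N \<le> L0 \<Longrightarrow> two_row_tableau L0 L1 N \<in> ssyt [L0, L1] 2"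
  by (auto simp: ssyt_def cells_two_rows two_row_tableau_def split: if_splits)

lemma card_two_row_tableau_entries:
  assumes "L1 \<le> N" "N \<le> L0"
  shows "card {c \<in> cells [L0, L1]. two_row_tableau L0 L1 N c = 0} = N"
    and "card {c \<in> cells [L0, L1]. two_row_tableau L0 L1 N c = 1} = L0 - N + L1"
proof -
  have e: "{c \<in> cells [L0, L1]. two_row_tableau L0 L1 N c = 0}
      = {(i, c). (i = 0 \<and> c \<in> {..<N}) \<or> (i = 1 \<and> c \<in> {}) \<or> (i = 2 \<and> c \<in> {}) \<or> (i = 3 \<and> c \<in> {})}"
    "{c \<in> cells [L0, L1]. two_row_tableau L0 L1 N c = 1}
      = {(i, c). (i = 0 \<and> c \<in> {N..<L0}) \<or> (i = 1 \<and> c \<in> {..<L1}) \<or> (i = 2 \<and> c \<in> {}) \<or> (i = 3 \<and> c \<in> {})}"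
    using assms by (auto simp: cells_two_rows two_row_tableau_def split: if_splits)
  show "card {c \<in> cells [L0, L1]. two_row_tableau L0 L1 N c = 0} = N"
    unfolding e(1) by (subst card_four_rows) auto
  show "card {c \<in> cells [L0, L1]. two_row_tableau L0 L1 N c = 1} = L0 - N + L1"
    unfolding e(2) using assms by (subst card_four_rows) auto
qed

text \<open>A tableau of shape \<open>(L0, L1)\<close> in two letters has only 1s in its second row, so it is
  determined by the number \<open>N\<close> of 0s in its first row.\<close>

lemma ssyt_two_rows_eq_two_row_tableau:
  assumes T: "T \<in> ssyt [L0, L1] 2" and "L1 \<le> L0"
  obtains N where "L1 \<le> N" "N \<le> L0" "T = two_row_tableau L0 L1 N"
proof
  let ?N = "row_count [L0, L1] T 1 0"
  show "?N \<le> L0" using row_count_le[of "[L0, L1]" T 1 0] by simp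
  show "L1 \<le> ?N"
    using row_count_interlace[OF T, of 0 1] row_count_ssyt_full[OF T, of 1] assms(2)
    by (simp add: numeral_2_eq_2)
  show "T = two_row_tableau L0 L1 ?N"
  proof
    fix p :: "nat \<times> nat"
    obtain i c where p: "p = (i, c)" by (cases p)
    show "T p = two_row_tableau L0 L1 ?N p"
    proof (cases "p \<in> cells [L0, L1]")
      case False
      then show ?thesis
        using ssyt_outside[OF T] by (auto simp: p cells_two_rows two_row_tableau_def)
    next
      case True
      then have "T (i, c) < 2" using ssyt_less[OF T] p by simp
      moreover consider "i = 0" "c < L0" | "i = 1" "c < L1"
        using True by (auto simp: p cells_two_rows)
      then show ?thesis
      proof cases
        case 1
        then show ?thesis
          using ssyt_less_iff_less_row_count[OF T, of 0 c 1] \<open>T (i, c) < 2\<close>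
          by (auto simp: p two_row_tableau_def)
      next
        case 2
        then show ?thesis
          using ssyt_column_strict[OF T, of 0 c] \<open>T (i, c) < 2\<close> assms(2)
          by (auto simp: p two_row_tableau_def cells_two_rows)
      qed
    qed
  qed
qed

lemma schur_coeff_two_rows:
  assumes "2 * i \<le> w"
  shows "schur_coeff [w - i, i] [p, q] = (if p + q = w \<and> i \<le> p \<and> i \<le> q then 1 else 0)"
proof -
  let ?sh = "[w - i, i]"
  let ?S = "{T \<in> ssyt ?sh 2. card {c \<in> cells ?sh. T c = 0} = p \<and> card {c \<in> cells ?sh. T c = 1} = q}"
  have "i \<le> w - i" using assms by simp
  have weight: "(\<forall>k < 2. card {c \<in> cells ?sh. T c = k} = [p, q] ! k)
      \<longleftrightarrow> card {c \<in> cells ?sh. T c = 0} = p \<and> card {c \<in> cells ?sh. T c = 1} = q" for T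
    by (auto simp: less_Suc_eq numeral_2_eq_2)
  have "length [p, q] = 2" by simp
  then have schur: "schur_coeff ?sh [p, q] = card ?S"
    unfolding schur_coeff_def by (simp only: weight)
  have entries: "T \<in> ?S \<longleftrightarrow> (\<exists>N. i \<le> N \<and> N \<le> w - i \<and> T = two_row_tableau (w - i) i N
      \<and> N = p \<and> w - i - N + i = q)" for T
  proof
    assume T: "T \<in> ?S"
    then obtain N where N: "i \<le> N" "N \<le> w - i" "T = two_row_tableau (w - i) i N"
      using ssyt_two_rows_eq_two_row_tableau[of T "w - i" i] \<open>i \<le> w - i\<close> by blast
    then show "\<exists>N. i \<le> N \<and> N \<le> w - i \<and> T = two_row_tableau (w - i) i N \<and> N = p \<and> w - i - N + i = q"
      using T card_two_row_tableau_entries[OF N(1,2)] by auto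
  next
    assume "\<exists>N. i \<le> N \<and> N \<le> w - i \<and> T = two_row_tableau (w - i) i N \<and> N = p \<and> w - i - N + i = q"
    then obtain N where N: "i \<le> N" "N \<le> w - i" "T = two_row_tableau (w - i) i N" "N = p" "w - i - N + i = q"
      by blast
    then show "T \<in> ?S"
      using two_row_tableau_in_ssyt[OF N(1,2)] card_two_row_tableau_entries[OF N(1,2)] by simp
  qed
  show ?thesis
  proof (cases "p + q = w \<and> i \<le> p \<and> i \<le> q")
    case True
    then have "?S = {two_row_tableau (w - i) i p}" using entries by auto
    then show ?thesis using True schur by simp
  next
    case False
    then have "?S = {}" using entries \<open>i \<le> w - i\<close> by auto
    then show ?thesis by (simp only: schur card.empty if_not_P[OF False])
  qed
qed

section \<open>Rectangle sums and mixed differences\<close>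

definition rect_sum :: "(nat \<Rightarrow> nat \<Rightarrow> int) \<Rightarrow> int \<Rightarrow> int \<Rightarrow> int" where
  "rect_sum G x y = (if x < 0 \<or> y < 0 then 0 else (\<Sum>i\<le>nat x. \<Sum>j\<le>nat y. G i j))"

definition mixed_diff :: "(int \<Rightarrow> int \<Rightarrow> int) \<Rightarrow> int \<Rightarrow> int \<Rightarrow> int" where
  "mixed_diff F x y = F x y - F (x - 1) y - F x (y - 1) + F (x - 1) (y - 1)"

lemma rect_sum_nat: "rect_sum G (int a) (int b) = (\<Sum>i\<le>a. \<Sum>j\<le>b. G i j)"
  by (simp add: rect_sum_def)

lemma mixed_diff_rect_sum: "mixed_diff (rect_sum G) (int i) (int j) = G i j"
  by (cases i; cases j) (simp_all add: mixed_diff_def rect_sum_def sum.atMost_Suc sum.distrib nat_add_distrib)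

lemma sum_atMost_telescope_int:
  fixes f :: "int \<Rightarrow> int"
  assumes "f (-1) = 0"
  shows "(\<Sum>j\<le>b. f (int j) - f (int j - 1)) = f (int b)"
proof (induction b)
  case (Suc b)
  have "int (Suc b) - 1 = int b" by simp
  then show ?case using Suc by (simp add: sum.atMost_Suc)
qed (use assms in simp)

lemma rect_sum_mixed_diff:
  assumes "\<And>x y. x < 0 \<or> y < 0 \<Longrightarrow> F x y = 0"
  shows "rect_sum (\<lambda>i j. mixed_diff F (int i) (int j)) (int a) (int b) = F (int a) (int b)"
proof -
  have "(\<Sum>j\<le>b. mixed_diff F (int i) (int j)) = F (int i) (int b) - F (int i - 1) (int b)" for i
    using sum_atMost_telescope_int[of "\<lambda>y. F (int i) y - F (int i - 1) y" b] assms
    by (simp add: mixed_diff_def algebra_simps)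
  then show ?thesis
    using sum_atMost_telescope_int[of "\<lambda>x. F x (int b)" a] assms by (simp add: rect_sum_nat)
qed

lemma kron_rhs_eq_rect_sum:
  "kron_rhs w G p q r s = (if p + q = w \<and> r + s = w then rect_sum G (int (min p q)) (int (min r s)) else 0)"
proof -
  have schur: "kron_rhs w G p q r s = (\<Sum>i \<in> {i. 2 * i \<le> w}. \<Sum>j \<in> {j. 2 * j \<le> w}.
      (if p + q = w \<and> r + s = w \<and> i \<le> min p q \<and> j \<le> min r s then G i j else 0))"
    unfolding kron_rhs_def by (intro sum.cong) (auto simp: schur_coeff_two_rows)
  show ?thesis
  proof (cases "p + q = w \<and> r + s = w")
    case True
    have fin: "finite {i. 2 * i \<le> w}" by (rule finite_subset[of _ "{..w}"]) auto
    have ranges: "{i. 2 * i \<le> w} \<inter> {i. i \<le> min p q} = {..min p q}"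
      "{j. 2 * j \<le> w} \<inter> {j. j \<le> min r s} = {..min r s}" using True by auto
    have "kron_rhs w G p q r s = (\<Sum>i \<in> {i. 2 * i \<le> w}.
        if i \<le> min p q then (\<Sum>j \<in> {j. 2 * j \<le> w}. if j \<le> min r s then G i j else 0) else 0)"
      unfolding schur using True by (intro sum.cong) auto
    also have "\<dots> = (\<Sum>i\<le>min p q. \<Sum>j\<le>min r s. G i j)"
      by (simp add: sum.inter_filter[OF fin, symmetric] ranges[symmetric] Int_def)
    finally show ?thesis using True by (simp add: rect_sum_nat)
  next
    case False
    then have "(p + q = w \<and> r + s = w \<and> i \<le> min p q \<and> j \<le> min r s) = False" for i j by auto
    then show ?thesis by (simp only: schur if_False sum.neutral_const if_not_P[OF False])
  qed
qed

section \<open>Gelfand--Tsetlin patterns of a four-row shape\<close>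

text \<open>The exponents of \<open>x1, x2, y1, y2\<close> in the monomial with exponent vector \<open>w\<close> in the
  variables \<open>x1 y1, x1 y2, x2 y1, x2 y2\<close>.\<close>

definition bidegree :: "nat list \<Rightarrow> nat \<times> nat \<times> nat \<times> nat" where
  "bidegree w = (w ! 0 + w ! 1, w ! 2 + w ! 3, w ! 0 + w ! 2, w ! 1 + w ! 3)"

text \<open>A Gelfand--Tsetlin pattern with top row \<open>(l1, l2, l3, l4)\<close> is stored as
  \<open>(m1, m2, m3, v1, v2, r)\<close>: its rows are the shapes of the subtableaux of entries \<open>< 3\<close>,
  \<open>< 2\<close> and \<open>< 1\<close> (the letters are \<open>0, \<dots>, 3\<close>).\<close>

type_synonym gt_pattern = "nat \<times> nat \<times> nat \<times> nat \<times> nat \<times> nat"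

locale four_row_shape =
  fixes l1 l2 l3 l4 :: nat
  assumes shape: "l2 \<le> l1" "l3 \<le> l2" "l4 \<le> l3"
begin

abbreviation lam :: "nat list" where "lam \<equiv> [l1, l2, l3, l4]"

abbreviation lam_weight :: nat where "lam_weight \<equiv> l1 + l2 + l3 + l4"

lemma cells_lam:
  "cells lam = {(i, c). (i = 0 \<and> c < l1) \<or> (i = 1 \<and> c < l2) \<or> (i = 2 \<and> c < l3) \<or> (i = 3 \<and> c < l4)}"
  by (auto simp: cells_def less_Suc_eq numeral_eq_Suc)

definition gt_patterns :: "gt_pattern set" where
  "gt_patterns = {(m1, m2, m3, v1, v2, r).
     l2 \<le> m1 \<and> m1 \<le> l1 \<and> l3 \<le> m2 \<and> m2 \<le> l2 \<and> l4 \<le> m3 \<and> m3 \<le> l3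
     \<and> m2 \<le> v1 \<and> v1 \<le> m1 \<and> m3 \<le> v2 \<and> v2 \<le> m2 \<and> v2 \<le> r \<and> r \<le> v1}"

definition gt_tableau :: "gt_pattern \<Rightarrow> nat \<times> nat \<Rightarrow> nat" where
  "gt_tableau g = (case g of (m1, m2, m3, v1, v2, r) \<Rightarrow> \<lambda>(i, c).
     if i = 0 \<and> c < l1 then (if c < r then 0 else if c < v1 then 1 else if c < m1 then 2 else 3)
     else if i = 1 \<and> c < l2 then (if c < v2 then 1 else if c < m2 then 2 else 3)
     else if i = 2 \<and> c < l3 then (if c < m3 then 2 else 3)
     else if i = 3 \<and> c < l4 then 3 else 0)"

definition gt_weight :: "gt_pattern \<Rightarrow> nat list" where
  "gt_weight g = (case g of (m1, m2, m3, v1, v2, r) \<Rightarrow>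
     [r, v1 + v2 - r, m1 + m2 + m3 - v1 - v2, l1 + l2 + l3 + l4 - (m1 + m2 + m3)])"

definition tableau_weight :: "(nat \<times> nat \<Rightarrow> nat) \<Rightarrow> nat list" where
  "tableau_weight T = map (\<lambda>k. card {c \<in> cells lam. T c = k}) [0..<4]"

definition gt_of_tableau :: "(nat \<times> nat \<Rightarrow> nat) \<Rightarrow> gt_pattern" where
  "gt_of_tableau T = (row_count lam T 3 0, row_count lam T 3 1, row_count lam T 3 2,
     row_count lam T 2 0, row_count lam T 2 1, row_count lam T 1 0)"

lemma gt_tableau_in_ssyt:
  assumes "g \<in> gt_patterns"
  shows "gt_tableau g \<in> ssyt lam 4"
  using assms
  by (cases g) (auto simp: ssyt_def cells_lam gt_tableau_def gt_patterns_def split: if_splits)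

lemma tableau_weight_gt_tableau:
  assumes "g \<in> gt_patterns"
  shows "tableau_weight (gt_tableau g) = gt_weight g"
proof -
  obtain m1 m2 m3 v1 v2 r where g: "g = (m1, m2, m3, v1, v2, r)" by (cases g)
  have le: "l2 \<le> m1" "m1 \<le> l1" "l3 \<le> m2" "m2 \<le> l2" "l4 \<le> m3" "m3 \<le> l3"
    "m2 \<le> v1" "v1 \<le> m1" "m3 \<le> v2" "v2 \<le> m2" "v2 \<le> r" "r \<le> v1"
    using assms by (auto simp: g gt_patterns_def)
  let ?E = "\<lambda>k. {c \<in> cells lam. gt_tableau g c = k}"
  have e: "?E 0 = {(i, c). (i = 0 \<and> c \<in> {..<r}) \<or> (i = 1 \<and> c \<in> {}) \<or> (i = 2 \<and> c \<in> {}) \<or> (i = 3 \<and> c \<in> {})}"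
    "?E 1 = {(i, c). (i = 0 \<and> c \<in> {r..<v1}) \<or> (i = 1 \<and> c \<in> {..<v2}) \<or> (i = 2 \<and> c \<in> {}) \<or> (i = 3 \<and> c \<in> {})}"
    "?E 2 = {(i, c). (i = 0 \<and> c \<in> {v1..<m1}) \<or> (i = 1 \<and> c \<in> {v2..<m2}) \<or> (i = 2 \<and> c \<in> {..<m3}) \<or> (i = 3 \<and> c \<in> {})}"
    "?E 3 = {(i, c). (i = 0 \<and> c \<in> {m1..<l1}) \<or> (i = 1 \<and> c \<in> {m2..<l2}) \<or> (i = 2 \<and> c \<in> {m3..<l3}) \<or> (i = 3 \<and> c \<in> {..<l4})}"
    using le by (auto simp: g cells_lam gt_tableau_def split: if_splits)
  have "[0..<4] = [0, 1, 2, 3::nat]" by (simp add: upt_rec)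
  then have "tableau_weight (gt_tableau g) = [card (?E 0), card (?E 1), card (?E 2), card (?E 3)]"
    by (simp add: tableau_weight_def)
  also have "\<dots> = gt_weight g"
    unfolding e using le by (simp only: card_four_rows finite_lessThan finite_atLeastLessThan finite.emptyI)
      (simp add: gt_weight_def g)
  finally show ?thesis .
qed

lemma gt_of_gt_tableau:
  assumes "g \<in> gt_patterns"
  shows "gt_of_tableau (gt_tableau g) = g"
proof -
  obtain m1 m2 m3 v1 v2 r where g: "g = (m1, m2, m3, v1, v2, r)" by (cases g)
  have le: "l2 \<le> m1" "m1 \<le> l1" "l3 \<le> m2" "m2 \<le> l2" "l4 \<le> m3" "m3 \<le> l3"
    "m2 \<le> v1" "v1 \<le> m1" "m3 \<le> v2" "v2 \<le> m2" "v2 \<le> r" "r \<le> v1"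
    using assms by (auto simp: g gt_patterns_def)
  let ?T = "gt_tableau g"
  have "{c. c < l1 \<and> ?T (0, c) < 3} = {..<m1}" "{c. c < l2 \<and> ?T (1, c) < 3} = {..<m2}"
    "{c. c < l3 \<and> ?T (2, c) < 3} = {..<m3}" "{c. c < l1 \<and> ?T (0, c) < 2} = {..<v1}"
    "{c. c < l2 \<and> ?T (1, c) < 2} = {..<v2}" "{c. c < l1 \<and> ?T (0, c) < 1} = {..<r}"
    using le by (auto simp: g gt_tableau_def)
  then show ?thesis by (simp add: gt_of_tableau_def row_count_def g)
qed

lemma gt_of_tableau_in_gt_patterns:
  assumes T: "T \<in> ssyt lam 4"
  shows "gt_of_tableau T \<in> gt_patterns"
proof -
  let ?N = "row_count lam T"
  have "?N 4 1 = l2" "?N 4 2 = l3" "?N 4 3 = l4"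
    using row_count_ssyt_full[OF T, of 1] row_count_ssyt_full[OF T, of 2] row_count_ssyt_full[OF T, of 3]
    by simp_all
  moreover have "?N 4 1 \<le> ?N 3 0" "?N 4 2 \<le> ?N 3 1" "?N 4 3 \<le> ?N 3 2"
    "?N 3 1 \<le> ?N 2 0" "?N 3 2 \<le> ?N 2 1" "?N 2 1 \<le> ?N 1 0"
    using row_count_interlace[OF T, of 0 3] row_count_interlace[OF T, of 1 3]
      row_count_interlace[OF T, of 2 3] row_count_interlace[OF T, of 0 2]
      row_count_interlace[OF T, of 1 2] row_count_interlace[OF T, of 0 1] shape
    by (simp_all add: numeral_eq_Suc)
  moreover have "?N 2 0 \<le> ?N 3 0" "?N 2 1 \<le> ?N 3 1" "?N 1 0 \<le> ?N 2 0"
    by (simp_all add: row_count_mono)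
  moreover have "?N 3 0 \<le> l1" "?N 3 1 \<le> l2" "?N 3 2 \<le> l3"
    using row_count_le[of lam T 3 0] row_count_le[of lam T 3 1] row_count_le[of lam T 3 2] by simp_all
  ultimately show ?thesis by (simp add: gt_of_tableau_def gt_patterns_def)
qed

lemma gt_tableau_gt_of_tableau:
  assumes T: "T \<in> ssyt lam 4"
  shows "gt_tableau (gt_of_tableau T) = T"
proof
  fix p :: "nat \<times> nat"
  obtain i c where p: "p = (i, c)" by (cases p)
  let ?N = "row_count lam T"
  have thresh: "T (i, c) < k \<longleftrightarrow> c < ?N k i" if "i < 4" "c < lam ! i" for i c k
    using ssyt_less_iff_less_row_count[OF T] that by simp
  have col: "T (i, c) < T (Suc i, c)" if "Suc i < 4" "c < lam ! Suc i" for i c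
    using ssyt_column_strict[OF T] that by (simp add: cells_def)
  show "gt_tableau (gt_of_tableau T) p = T p"
  proof (cases "p \<in> cells lam")
    case False
    then show ?thesis
      using ssyt_outside[OF T] by (auto simp: p cells_lam gt_tableau_def gt_of_tableau_def)
  next
    case True
    then have "T (i, c) < 4" using ssyt_less[OF T] p by simp
    moreover consider "i = 0" "c < l1" | "i = 1" "c < l2" | "i = 2" "c < l3" | "i = 3" "c < l4"
      using True by (auto simp: p cells_lam)
    then show ?thesis
    proof cases
      case 1
      then show ?thesis using thresh[of 0 c 1] thresh[of 0 c 2] thresh[of 0 c 3] \<open>T (i, c) < 4\<close>
        by (auto simp: p gt_tableau_def gt_of_tableau_def)
    next
      case 2
      then show ?thesis using thresh[of 1 c 2] thresh[of 1 c 3] col[of 0 c] shape \<open>T (i, c) < 4\<close>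
        by (auto simp: p gt_tableau_def gt_of_tableau_def)
    next
      case 3
      then show ?thesis using thresh[of 2 c 3] col[of 0 c] col[of 1 c] shape \<open>T (i, c) < 4\<close>
        by (auto simp: p gt_tableau_def gt_of_tableau_def numeral_eq_Suc)
    next
      case 4
      then show ?thesis using col[of 0 c] col[of 1 c] col[of 2 c] shape \<open>T (i, c) < 4\<close>
        by (auto simp: p gt_tableau_def gt_of_tableau_def numeral_eq_Suc)
    qed
  qed
qed

lemma bij_betw_gt_tableau: "bij_betw gt_tableau gt_patterns (ssyt lam 4)"
  by (rule bij_betw_byWitness[where f' = gt_of_tableau])
    (auto simp: gt_of_gt_tableau gt_tableau_gt_of_tableau gt_tableau_in_ssyt gt_of_tableau_in_gt_patterns)

lemma schur_coeff_eq_card_gt_patterns: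
  assumes "length a = 4"
  shows "schur_coeff lam a = card {g \<in> gt_patterns. gt_weight g = a}"
proof -
  have "(\<forall>k < length a. card {c \<in> cells lam. T c = k} = a ! k) \<longleftrightarrow> tableau_weight T = a" for T
    using assms by (auto simp: tableau_weight_def list_eq_iff_nth_eq)
  then have "schur_coeff lam a = card {T \<in> ssyt lam 4. tableau_weight T = a}"
    using assms by (simp add: schur_coeff_def)
  also have "\<dots> = card {g \<in> gt_patterns. tableau_weight (gt_tableau g) = a}"
    by (rule card_filter_bij_betw[OF bij_betw_gt_tableau, symmetric])
  also have "\<dots> = card {g \<in> gt_patterns. gt_weight g = a}"
    by (rule arg_cong[where f = card]) (auto simp: tableau_weight_gt_tableau)
  finally show ?thesis .
qed

text \<open>The Bender--Knuth involutions: reflecting one row of a pattern inside the interval left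
  free by its neighbours exchanges the multiplicities of two consecutive letters.\<close>

definition bk01 :: "gt_pattern \<Rightarrow> gt_pattern" where
  "bk01 = (\<lambda>(m1, m2, m3, v1, v2, r). (m1, m2, m3, v1, v2, v1 + v2 - r))"

definition bk12 :: "gt_pattern \<Rightarrow> gt_pattern" where
  "bk12 = (\<lambda>(m1, m2, m3, v1, v2, r). (m1, m2, m3, max m2 r + m1 - v1, m3 + min m2 r - v2, r))"

definition bk23 :: "gt_pattern \<Rightarrow> gt_pattern" where
  "bk23 = (\<lambda>(m1, m2, m3, v1, v2, r).
     (max l2 v1 + l1 - m1, max l3 v2 + min l2 v1 - m2, l4 + min l3 v2 - m3, v1, v2, r))"

lemma bk01_involution:
  assumes "g \<in> gt_patterns"
  shows "bk01 g \<in> gt_patterns" "bk01 (bk01 g) = g"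
    "gt_weight (bk01 g) = map ((!) (gt_weight g)) [1, 0, 2, 3]"
  using assms by (cases g; auto simp: gt_patterns_def bk01_def gt_weight_def)+

lemma bk12_involution:
  assumes "g \<in> gt_patterns"
  shows "bk12 g \<in> gt_patterns" "bk12 (bk12 g) = g"
    "gt_weight (bk12 g) = map ((!) (gt_weight g)) [0, 2, 1, 3]"
  using assms by (cases g; auto simp: gt_patterns_def bk12_def gt_weight_def max_def min_def)+

lemma bk23_involution:
  assumes "g \<in> gt_patterns"
  shows "bk23 g \<in> gt_patterns" "bk23 (bk23 g) = g"
    "gt_weight (bk23 g) = map ((!) (gt_weight g)) [0, 1, 3, 2]"
  using assms by (cases g; auto simp: gt_patterns_def bk23_def gt_weight_def max_def min_def)+

lemma bij_betw_bk01: "bij_betw bk01 gt_patterns gt_patterns"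
  by (rule bij_betw_byWitness[where f' = bk01]) (auto simp: bk01_involution)

lemma bij_betw_bk12: "bij_betw bk12 gt_patterns gt_patterns"
  by (rule bij_betw_byWitness[where f' = bk12]) (auto simp: bk12_involution)

lemma bij_betw_bk23: "bij_betw bk23 gt_patterns gt_patterns"
  by (rule bij_betw_byWitness[where f' = bk23]) (auto simp: bk23_involution)

definition gt_count :: "nat \<Rightarrow> nat \<Rightarrow> nat \<Rightarrow> nat \<Rightarrow> nat" where
  "gt_count p q r s = card {g \<in> gt_patterns. bidegree (gt_weight g) = (p, q, r, s)}"

lemma gt_count_permuted:
  assumes "bij_betw \<sigma> gt_patterns gt_patterns"
    and "\<And>g. g \<in> gt_patterns \<Longrightarrow> gt_weight (\<sigma> g) = map ((!) (gt_weight g)) \<pi>"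
  shows "gt_count p q r s = card {g \<in> gt_patterns. bidegree (map ((!) (gt_weight g)) \<pi>) = (p, q, r, s)}"
proof -
  have "gt_count p q r s = card {g \<in> gt_patterns. bidegree (gt_weight (\<sigma> g)) = (p, q, r, s)}"
    unfolding gt_count_def by (rule card_filter_bij_betw[OF assms(1), symmetric])
  also have "\<dots> = card {g \<in> gt_patterns. bidegree (map ((!) (gt_weight g)) \<pi>) = (p, q, r, s)}"
    by (rule arg_cong[where f = card]) (auto simp: assms(2))
  finally show ?thesis .
qed

lemma gt_count_swap_x: "gt_count p q r s = gt_count q p r s"
proof -
  let ?\<sigma> = "bk12 \<circ> bk01 \<circ> bk23 \<circ> bk12"
  have "bij_betw ?\<sigma> gt_patterns gt_patterns"
    by (rule bij_betw_trans[OF bij_betw_bk12 bij_betw_trans[OF bij_betw_bk23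
          bij_betw_trans[OF bij_betw_bk01 bij_betw_bk12]]])
  moreover have "gt_weight (?\<sigma> g) = map ((!) (gt_weight g)) [2, 3, 0, 1]" if "g \<in> gt_patterns" for g
    using that by (simp add: bk01_involution bk12_involution bk23_involution)
  ultimately have "gt_count q p r s
      = card {g \<in> gt_patterns. bidegree (map ((!) (gt_weight g)) [2, 3, 0, 1]) = (q, p, r, s)}"
    by (rule gt_count_permuted)
  also have "\<dots> = gt_count p q r s"
    unfolding gt_count_def bidegree_def by (rule arg_cong[where f = card]) auto
  finally show ?thesis ..
qed

lemma gt_count_swap_y: "gt_count p q r s = gt_count p q s r"
proof -
  let ?\<sigma> = "bk01 \<circ> bk23"
  have "bij_betw ?\<sigma> gt_patterns gt_patterns"
    by (rule bij_betw_trans[OF bij_betw_bk23 bij_betw_bk01])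
  moreover have "gt_weight (?\<sigma> g) = map ((!) (gt_weight g)) [1, 0, 3, 2]" if "g \<in> gt_patterns" for g
    using that by (simp add: bk01_involution bk23_involution)
  ultimately have "gt_count p q s r
      = card {g \<in> gt_patterns. bidegree (map ((!) (gt_weight g)) [1, 0, 3, 2]) = (p, q, s, r)}"
    by (rule gt_count_permuted)
  also have "\<dots> = gt_count p q r s"
    unfolding gt_count_def bidegree_def by (rule arg_cong[where f = card]) auto
  finally show ?thesis ..
qed

lemma kron_lhs_eq_gt_count: "kron_lhs lam p q r s = int (gt_count p q r s)"
proof -
  let ?I = "{(a0, a1, a2, a3) \<in> {..p} \<times> {..p} \<times> {..q} \<times> {..q}.
      a0 + a1 = p \<and> a2 + a3 = q \<and> a0 + a2 = r \<and> a1 + a3 = s}"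
  let ?A = "\<lambda>(a0, a1, a2, a3). {g \<in> gt_patterns. gt_weight g = [a0, a1, a2, a3]}"
  have fin: "finite ?I" "finite gt_patterns"
    by (rule finite_subset[of _ "{..p} \<times> {..p} \<times> {..q} \<times> {..q}"]; auto)
       (rule finite_subset[of _ "{..l1} \<times> {..l1} \<times> {..l1} \<times> {..l1} \<times> {..l1} \<times> {..l1}"];
        auto simp: gt_patterns_def)
  have "kron_lhs lam p q r s = int (\<Sum>x\<in>?I. card (?A x))"
    unfolding kron_lhs_def by (auto simp: schur_coeff_eq_card_gt_patterns intro!: sum.cong)
  also have "(\<Sum>x\<in>?I. card (?A x)) = card (\<Union>x\<in>?I. ?A x)"
    using fin by (intro card_UN_disjoint[symmetric]) auto
  also have "(\<Union>x\<in>?I. ?A x) = {g \<in> gt_patterns. bidegree (gt_weight g) = (p, q, r, s)}"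
  proof (intro equalityI subsetI)
    fix g assume g: "g \<in> {g \<in> gt_patterns. bidegree (gt_weight g) = (p, q, r, s)}"
    let ?w = "gt_weight g"
    have "?w = [?w ! 0, ?w ! 1, ?w ! 2, ?w ! 3]" by (cases g) (simp add: gt_weight_def)
    then have "g \<in> ?A (?w ! 0, ?w ! 1, ?w ! 2, ?w ! 3)" using g by simp
    moreover have "(?w ! 0, ?w ! 1, ?w ! 2, ?w ! 3) \<in> ?I" using g by (auto simp: bidegree_def)
    ultimately show "g \<in> (\<Union>x\<in>?I. ?A x)" by (rule UN_I[rotated])
  qed (auto simp: bidegree_def)
  finally show ?thesis by (simp add: gt_count_def)
qed

lemma gt_count_eq_0:
  assumes "\<not> (p + q = lam_weight \<and> r + s = lam_weight)"
  shows "gt_count p q r s = 0"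
proof -
  have "p + q = lam_weight \<and> r + s = lam_weight"
    if "g \<in> gt_patterns" "bidegree (gt_weight g) = (p, q, r, s)" for g
    using that by (cases g) (auto simp: gt_patterns_def gt_weight_def bidegree_def)
  then have "{g \<in> gt_patterns. bidegree (gt_weight g) = (p, q, r, s)} = {}"
    using assms by blast
  then show ?thesis unfolding gt_count_def by (simp only: card.empty)
qed

lemma gt_count_eq_min:
  assumes "p + q = lam_weight" "r + s = lam_weight"
  shows "gt_count p q r s = gt_count (min p q) (lam_weight - min p q) (min r s) (lam_weight - min r s)"
proof -
  have "max p q = lam_weight - min p q" "max r s = lam_weight - min r s"
    using assms by (auto simp: max_def min_def)
  moreover have "gt_count p q r s = gt_count (min p q) (max p q) r s"
    using gt_count_swap_x[of p q r s] by (cases "p \<le> q") (auto simp: min_def max_def)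
  moreover have "\<dots> = gt_count (min p q) (max p q) (min r s) (max r s)"
    using gt_count_swap_y[of "min p q" "max p q" r s] by (cases "r \<le> s") (auto simp: min_def max_def)
  ultimately show ?thesis by (simp only:)
qed

definition cumulative_count :: "int \<Rightarrow> int \<Rightarrow> int" where
  "cumulative_count x y = (if x < 0 \<or> y < 0 then 0
     else int (gt_count (nat x) (lam_weight - nat x) (nat y) (lam_weight - nat y)))"

lemma kron_lhs_eq_cumulative_count:
  "kron_lhs lam p q r s = (if p + q = lam_weight \<and> r + s = lam_weight
     then cumulative_count (int (min p q)) (int (min r s)) else 0)"
proof (cases "p + q = lam_weight \<and> r + s = lam_weight")
  case True
  then show ?thesis
    using gt_count_eq_min[of p q r s] by (simp add: kron_lhs_eq_gt_count cumulative_count_def)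
next
  case False
  then show ?thesis by (simp only: kron_lhs_eq_gt_count gt_count_eq_0[OF False] if_not_P[OF False] if_False of_nat_0)
qed

definition kron_expansion :: "(nat \<Rightarrow> nat \<Rightarrow> int) \<Rightarrow> bool" where
  "kron_expansion G \<longleftrightarrow> (\<forall>i j. \<not> (2 * i \<le> lam_weight \<and> 2 * j \<le> lam_weight) \<longrightarrow> G i j = 0)
     \<and> (\<forall>p q r s. kron_lhs lam p q r s = kron_rhs lam_weight G p q r s)"

definition kron_candidate :: "nat \<Rightarrow> nat \<Rightarrow> int" where
  "kron_candidate i j = (if 2 * i \<le> lam_weight \<and> 2 * j \<le> lam_weight
     then mixed_diff cumulative_count (int i) (int j) else 0)"

lemma rect_sum_kron_candidate:
  assumes "2 * a \<le> lam_weight" "2 * b \<le> lam_weight"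
  shows "rect_sum kron_candidate (int a) (int b) = cumulative_count (int a) (int b)"
proof -
  have "rect_sum kron_candidate (int a) (int b)
      = rect_sum (\<lambda>i j. mixed_diff cumulative_count (int i) (int j)) (int a) (int b)"
    using assms by (simp add: rect_sum_nat kron_candidate_def)
  also have "\<dots> = cumulative_count (int a) (int b)"
    by (rule rect_sum_mixed_diff) (simp add: cumulative_count_def)
  finally show ?thesis .
qed

lemma kron_expansion_kron_candidate: "kron_expansion kron_candidate"
  unfolding kron_expansion_def
proof (intro conjI allI impI)
  fix p q r s
  show "kron_lhs lam p q r s = kron_rhs lam_weight kron_candidate p q r s"
  proof (cases "p + q = lam_weight \<and> r + s = lam_weight")
    case True
    then have "2 * min p q \<le> lam_weight" "2 * min r s \<le> lam_weight" by (auto simp: min_def)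
    then show ?thesis
      by (simp only: kron_lhs_eq_cumulative_count kron_rhs_eq_rect_sum if_P[OF True] rect_sum_kron_candidate)
  next
    case False
    then show ?thesis
      by (simp only: kron_lhs_eq_cumulative_count kron_rhs_eq_rect_sum if_not_P[OF False] if_False)
  qed
qed (auto simp: kron_candidate_def)

text \<open>Both sides of the expansion only depend on \<open>min p q\<close> and \<open>min r s\<close>, where the right-hand
  side is the rectangle sum of the coefficients; so the coefficients are recovered as mixed
  differences.\<close>

lemma kron_expansion_imp_eq_kron_candidate:
  assumes "kron_expansion G"
  shows "G = kron_candidate"
proof (intro ext)
  fix i j
  show "G i j = kron_candidate i j"
  proof (cases "2 * i \<le> lam_weight \<and> 2 * j \<le> lam_weight")
    case True
    have agree: "rect_sum G x y = cumulative_count x y" if "x \<le> int i" "y \<le> int j" for x y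
    proof (cases "x < 0 \<or> y < 0")
      case False
      then obtain a b where ab: "x = int a" "y = int b" by (metis nonneg_int_cases not_less)
      have "2 * a \<le> lam_weight" "2 * b \<le> lam_weight" using ab that True by auto
      then have "min a (lam_weight - a) = a" "min b (lam_weight - b) = b"
        "a + (lam_weight - a) = lam_weight" "b + (lam_weight - b) = lam_weight"
        by auto
      moreover have "kron_lhs lam a (lam_weight - a) b (lam_weight - b)
          = kron_rhs lam_weight G a (lam_weight - a) b (lam_weight - b)"
        using assms by (simp add: kron_expansion_def)
      ultimately show ?thesis
        by (simp add: ab kron_lhs_eq_cumulative_count kron_rhs_eq_rect_sum)
    qed (simp add: rect_sum_def cumulative_count_def)
    have "G i j = mixed_diff (rect_sum G) (int i) (int j)" by (simp add: mixed_diff_rect_sum)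
    also have "\<dots> = kron_candidate i j" using True by (simp add: mixed_diff_def agree kron_candidate_def)
    finally show ?thesis .
  next
    case False
    then show ?thesis using assms by (auto simp: kron_expansion_def kron_candidate_def)
  qed
qed

lemma kron_family_eq_mixed_diff:
  assumes "2 * i \<le> lam_weight" "2 * j \<le> lam_weight"
  shows "kron_family lam i j = mixed_diff cumulative_count (int i) (int j)"
proof -
  have "sum_list lam = lam_weight" by simp
  then have "kron_family lam = (THE G. kron_expansion G)"
    by (simp only: kron_family_def kron_expansion_def)
  also have "\<dots> = kron_candidate"
    using kron_expansion_kron_candidate kron_expansion_imp_eq_kron_candidate by (rule the_equality)
  finally show ?thesis using assms by (simp add: kron_candidate_def)
qed

end

section \<open>Counting patterns by their second row\<close>

definition fibre_count :: "int \<Rightarrow> int \<Rightarrow> int \<Rightarrow> int \<Rightarrow> int \<Rightarrow> int" where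
  "fibre_count a b c i j =
     max 0 (min (min b (i - b)) (min (a + b + c - j) (i + j - a - b - c)) - max c (i - a) + 1)"

lemma card_int_interval_nat:
  fixes L U :: int
  assumes "0 \<le> L"
  shows "card {t::nat. L \<le> int t \<and> int t \<le> U} = nat (max 0 (U - L + 1))"
proof (cases "L \<le> U")
  case True
  then have "{t::nat. L \<le> int t \<and> int t \<le> U} = {nat L..nat U}" using assms by auto
  then show ?thesis using assms True by simp
next
  case False
  then have empty: "{t::nat. L \<le> int t \<and> int t \<le> U} = {}" by auto
  show ?thesis unfolding empty using False by simp
qed

definition pattern_fibre :: "nat \<Rightarrow> nat \<Rightarrow> nat \<times> nat \<times> nat \<Rightarrow> (nat \<times> nat \<times> nat) set" where
  "pattern_fibre i j = (\<lambda>(a, b, c). {(v1, v2, r). b \<le> v1 \<and> v1 \<le> a \<and> c \<le> v2 \<and> v2 \<le> b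
     \<and> v2 \<le> r \<and> r \<le> v1 \<and> v1 + v2 = i \<and> r + (a + b + c) = i + j})"

text \<open>\<open>pattern_fibre i j (a, b, c)\<close> collects the last two rows of the patterns with second row
  \<open>(a, b, c)\<close> and bidegree \<open>(i, _, j, _)\<close>; such rows are determined by \<open>v2\<close>, which ranges over
  an interval.\<close>

lemma card_pattern_fibre:
  "card (pattern_fibre i j (a, b, c)) = nat (fibre_count (int a) (int b) (int c) (int i) (int j))"
proof -
  let ?X = "pattern_fibre i j (a, b, c)"
  let ?T = "{t::nat. max (int c) (int i - int a) \<le> int t \<and> int t \<le>
      min (min (int b) (int i - int b)) (min (int a + int b + int c - int j) (int i + int j - int a - int b - int c))}"
  let ?h = "\<lambda>t. (i - t, t, i + j - (a + b + c))"
  have "?X = ?h ` ?T"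
  proof (intro equalityI subsetI)
    fix x assume "x \<in> ?X"
    then obtain v1 v2 r where "x = (v1, v2, r)" "b \<le> v1" "v1 \<le> a" "c \<le> v2" "v2 \<le> b" "v2 \<le> r"
      "r \<le> v1" "v1 + v2 = i" "r + (a + b + c) = i + j" by (auto simp: pattern_fibre_def)
    then show "x \<in> ?h ` ?T" by (intro image_eqI[of _ _ v2]) auto
  qed (auto simp: pattern_fibre_def)
  moreover have "inj_on ?h ?T" by (rule inj_onI) auto
  ultimately have "card ?X = card ?T" by (simp add: card_image)
  also have "\<dots> = nat (fibre_count (int a) (int b) (int c) (int i) (int j))"
    unfolding fibre_count_def by (subst card_int_interval_nat) simp_all
  finally show ?thesis .
qed

lemma fibre_count_neg:
  assumes "0 \<le> b" "0 \<le> c" "i < 0 \<or> j < 0"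
  shows "fibre_count a b c i j = 0"
  using assms by (auto simp: fibre_count_def)

lemma fibre_count_eq_truncated_min:
  assumes "i + j \<le> a + 2 * b + c" "j \<le> a + c" "i + 2 * j \<le> 2 * (a + b + c)"
  shows "fibre_count a b c i j = max 0 (min (i + j - (a + b + 2 * c)) (j - (b + c)) + 1)"
proof -
  have "min (min b (i - b)) (min (a + b + c - j) (i + j - a - b - c)) = i + j - a - b - c"
    using assms by simp
  moreover have "i + j - a - b - c - max c (i - a) = min (i + j - (a + b + 2 * c)) (j - (b + c))"
    by (simp add: max_def min_def)
  ultimately show ?thesis unfolding fibre_count_def by (simp only:)
qed

lemma mixed_diff_truncated_min:
  "mixed_diff (\<lambda>x y. max 0 (min (x + y - K) (y - K') + 1)) x y = (if x + y = K \<and> K' \<le> y then 1 else 0)"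
  unfolding mixed_diff_def by (simp add: max_def min_def)

lemma mixed_diff_sum:
  "mixed_diff (\<lambda>x y. \<Sum>m\<in>A. f m x y) x y = (\<Sum>m\<in>A. mixed_diff (f m) x y)"
  by (simp add: mixed_diff_def sum.distrib sum_subtractf)

context four_row_shape
begin

definition gt_second_rows :: "(nat \<times> nat \<times> nat) set" where
  "gt_second_rows = {l2..l1} \<times> {l3..l2} \<times> {l4..l3}"

lemma bidegree_gt_weight:
  assumes "(m1, m2, m3, v1, v2, r) \<in> gt_patterns"
  shows "bidegree (gt_weight (m1, m2, m3, v1, v2, r))
    = (v1 + v2, lam_weight - (v1 + v2), r + (m1 + m2 + m3) - (v1 + v2),
       lam_weight - (r + (m1 + m2 + m3) - (v1 + v2)))"
  using assms unfolding gt_patterns_def bidegree_def gt_weight_def by auto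

lemma gt_patterns_with_bidegree:
  assumes "i \<le> lam_weight" "j \<le> lam_weight"
  shows "{g \<in> gt_patterns. bidegree (gt_weight g) = (i, lam_weight - i, j, lam_weight - j)}
    = (\<lambda>((a, b, c), (v1, v2, r)). (a, b, c, v1, v2, r)) ` (SIGMA m:gt_second_rows. pattern_fibre i j m)"
    (is "?L = ?f ` ?S")
proof (intro equalityI subsetI)
  fix g assume g: "g \<in> ?L"
  obtain m1 m2 m3 v1 v2 r where geq: "g = (m1, m2, m3, v1, v2, r)" by (cases g)
  have gt: "(m1, m2, m3, v1, v2, r) \<in> gt_patterns" using g geq by simp
  then have "v1 + v2 = i" "r + (m1 + m2 + m3) = i + j"
    using g assms by (auto simp: geq bidegree_gt_weight gt_patterns_def)
  then have "((m1, m2, m3), (v1, v2, r)) \<in> ?S"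
    using gt by (auto simp: gt_patterns_def gt_second_rows_def pattern_fibre_def)
  then show "g \<in> ?f ` ?S" by (rule image_eqI[rotated]) (simp add: geq)
next
  fix g assume "g \<in> ?f ` ?S"
  then obtain a b c v1 v2 r where geq: "g = (a, b, c, v1, v2, r)"
    and "(a, b, c) \<in> gt_second_rows" "(v1, v2, r) \<in> pattern_fibre i j (a, b, c)" by auto
  then have gt: "g \<in> gt_patterns" and "v1 + v2 = i" "r + (a + b + c) = i + j"
    by (auto simp: gt_patterns_def gt_second_rows_def pattern_fibre_def)
  then show "g \<in> ?L" using assms by (simp add: geq bidegree_gt_weight)
qed

lemma cumulative_count_eq_sum_fibre_count:
  assumes "x \<le> int lam_weight" "y \<le> int lam_weight"
  shows "cumulative_count x y = (\<Sum>(a, b, c)\<in>gt_second_rows. fibre_count (int a) (int b) (int c) x y)"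
proof (cases "x < 0 \<or> y < 0")
  case True
  then show ?thesis
    by (auto simp: cumulative_count_def gt_second_rows_def fibre_count_neg intro!: sum.neutral)
next
  case False
  then obtain i j where ij: "x = int i" "y = int j" by (metis nonneg_int_cases not_less)
  have inj: "inj_on (\<lambda>((a, b, c), (v1, v2, r)). (a, b, c, v1, v2, r))
      (SIGMA m:gt_second_rows. pattern_fibre i j m)"
    by (rule inj_onI) auto
  have fin: "finite gt_second_rows" "finite (pattern_fibre i j m)" for m
    by (simp add: gt_second_rows_def)
      (rule finite_subset[of _ "{..fst m} \<times> {..fst m} \<times> {..fst m}"]; auto simp: pattern_fibre_def split: prod.splits)
  have "cumulative_count x y = int (\<Sum>m\<in>gt_second_rows. card (pattern_fibre i j m))"
    using assms by (simp add: ij cumulative_count_def gt_count_def gt_patterns_with_bidegree card_image[OF inj] fin)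
  also have "\<dots> = (\<Sum>(a, b, c)\<in>gt_second_rows. fibre_count (int a) (int b) (int c) x y)"
    unfolding of_nat_sum
  proof (rule sum.cong)
    fix m :: "nat \<times> nat \<times> nat"
    obtain a b c where "m = (a, b, c)" by (cases m)
    moreover have "0 \<le> fibre_count (int a) (int b) (int c) (int i) (int j)"
      by (simp add: fibre_count_def)
    ultimately show "int (card (pattern_fibre i j m))
        = (case m of (a, b, c) \<Rightarrow> fibre_count (int a) (int b) (int c) x y)"
      by (simp add: ij card_pattern_fibre)
  qed simp
  finally show ?thesis .
qed

lemma mixed_diff_fibre_count:
  assumes "(a, b, c) \<in> gt_second_rows" "N \<le> l2 + l4" "M + N \<le> (l3 + l4) + (l2 + l3)"
  shows "mixed_diff (fibre_count (int a) (int b) (int c)) (int M) (int N)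
    = (if a + b + 2 * c = M + N \<and> b + c \<le> N then 1 else 0)"
proof -
  let ?K = "int a + int b + 2 * int c" and ?K' = "int b + int c"
  have abc: "l2 \<le> a" "l3 \<le> b" "l4 \<le> c" using assms(1) by (auto simp: gt_second_rows_def)
  have "fibre_count (int a) (int b) (int c) x y = max 0 (min (x + y - ?K) (y - ?K') + 1)"
    if "x \<le> int M" "y \<le> int N" for x y
  proof -
    have "x + y \<le> int a + 2 * int b + int c" "y \<le> int a + int c"
      "x + 2 * y \<le> 2 * (int a + int b + int c)"
      using that abc assms(2,3) by simp_all
    then show ?thesis by (rule fibre_count_eq_truncated_min)
  qed
  then have "mixed_diff (fibre_count (int a) (int b) (int c)) (int M) (int N)
      = mixed_diff (\<lambda>x y. max 0 (min (x + y - ?K) (y - ?K') + 1)) (int M) (int N)"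
    by (simp add: mixed_diff_def)
  then show ?thesis by (simp add: mixed_diff_truncated_min)
qed

lemma card_second_rows_eq_pS:
  assumes "l3 + l4 \<le> N" "N \<le> l2 + l4" "(l3 + l4) + (l2 + l4) \<le> M + N"
    "M + N \<le> (l3 + l4) + min (l2 + l3) (l1 + l4)"
  shows "card {(a, b, c) \<in> gt_second_rows. a + b + 2 * c = M + N \<and> b + c \<le> N}
    = pS (int N - int l3 - int l4) (int M + int N - int l2 - int l3 - 2 * int l4)"
proof -
  let ?n = "int N - int l3 - int l4"
  let ?m = "int M + int N - int l2 - int l3 - 2 * int l4"
  let ?Q = "{(x1 :: nat, x2 :: nat, x3 :: nat, x4 :: nat).
      int x1 + int x3 + int x4 = ?n \<and> int x2 + int x3 + 2 * int x4 = ?m}"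
  let ?B = "{(a, b, c) \<in> gt_second_rows. a + b + 2 * c = M + N \<and> b + c \<le> N}"
  let ?h = "\<lambda>(x1::nat, x2::nat, x3::nat, x4::nat). (l2 + x2, l3 + x3, l4 + x4)"
  have inj: "inj_on ?h ?Q"
  proof (rule inj_onI)
    fix x y assume "x \<in> ?Q" "y \<in> ?Q" "?h x = ?h y"
    then show "x = y" by (cases x; cases y) auto
  qed
  have img: "?h ` ?Q = ?B"
  proof (intro equalityI subsetI)
    fix z assume "z \<in> ?h ` ?Q"
    then obtain x1 x2 x3 x4 where x: "int x1 + int x3 + int x4 = ?n" "int x2 + int x3 + 2 * int x4 = ?m"
      and z: "z = (l2 + x2, l3 + x3, l4 + x4)" by auto
    have "l2 + x2 \<le> l1" "l3 + x3 \<le> l2" "l4 + x4 \<le> l3" using x assms shape by linarith+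
    then show "z \<in> ?B" using x assms by (auto simp: z gt_second_rows_def)
  next
    fix z assume "z \<in> ?B"
    then obtain a b c where z: "z = (a, b, c)" and abc: "l2 \<le> a" "l3 \<le> b" "l4 \<le> c"
      "a + b + 2 * c = M + N" "b + c \<le> N" by (auto simp: gt_second_rows_def)
    show "z \<in> ?h ` ?Q"
    proof (rule image_eqI)
      show "z = ?h (N - b - c, a - l2, b - l3, c - l4)" using z abc by auto
      show "(N - b - c, a - l2, b - l3, c - l4) \<in> ?Q" using abc by auto
    qed
  qed
  have nonneg: "\<not> (?n < 0 \<or> ?m < 0)" using assms by simp
  have "card ?B = card ?Q" unfolding img[symmetric] by (rule card_image[OF inj])
  also have "\<dots> = pS ?n ?m" unfolding pS_def by (simp only: nonneg if_False)
  finally show ?thesis .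
qed

lemma kron_family_eq_pS:
  assumes "N \<le> M" "2 * M \<le> lam_weight"
    and region: "l3 + l4 \<le> N" "N \<le> l2 + l4" "(l3 + l4) + (l2 + l4) \<le> M + N"
      "M + N \<le> (l3 + l4) + min (l2 + l3) (l1 + l4)"
  shows "kron_family lam M N
    = int (pS (int N - int l3 - int l4) (int M + int N - int l2 - int l3 - 2 * int l4))"
proof -
  let ?f = "\<lambda>(a, b, c). fibre_count (int a) (int b) (int c)"
  have "M + N \<le> (l3 + l4) + (l2 + l3)" using region(4) by simp
  have "2 * N \<le> lam_weight" using assms by linarith
  then have "kron_family lam M N = mixed_diff cumulative_count (int M) (int N)"
    using assms by (simp add: kron_family_eq_mixed_diff)
  also have "\<dots> = mixed_diff (\<lambda>x y. \<Sum>m\<in>gt_second_rows. ?f m x y) (int M) (int N)"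
    using assms by (simp add: mixed_diff_def cumulative_count_eq_sum_fibre_count split_def)
  also have "\<dots> = (\<Sum>(a, b, c)\<in>gt_second_rows. if a + b + 2 * c = M + N \<and> b + c \<le> N then 1 else 0)"
    using region(2) \<open>M + N \<le> (l3 + l4) + (l2 + l3)\<close>
    by (auto simp: mixed_diff_sum mixed_diff_fibre_count intro!: sum.cong)
  also have "\<dots> = int (card {m \<in> gt_second_rows. case m of (a, b, c) \<Rightarrow> a + b + 2 * c = M + N \<and> b + c \<le> N})"
    by (simp add: sum.inter_filter[symmetric] gt_second_rows_def split_def)
  also have "\<dots> = int (card {(a, b, c) \<in> gt_second_rows. a + b + 2 * c = M + N \<and> b + c \<le> N})"
    by (rule arg_cong[where f = "\<lambda>A. int (card A)"]) auto
  also have "\<dots> = int (pS (int N - int l3 - int l4) (int M + int N - int l2 - int l3 - 2 * int l4))"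
    using region by (simp add: card_second_rows_eq_pS)
  finally show ?thesis .
qed

end

theorem corollary3p4:
  fixes l1 l2 l3 l4 m1 m2 n1 n2 :: nat
  assumes lam_part: "l1 \<ge> l2" "l2 \<ge> l3" "l3 \<ge> l4"
    and mu_part: "m1 \<ge> m2" and nu_part: "n1 \<ge> n2"
    and weight_mu: "m1 + m2 = l1 + l2 + l3 + l4"
    and weight_nu: "n1 + n2 = l1 + l2 + l3 + l4"
    and mu_nu: "m2 \<ge> n2"
  shows "(l3 + l4 \<le> n2 \<and> n2 \<le> l2 + l4
          \<and> (l3 + l4) + (l2 + l4) \<le> m2 + n2
          \<and> m2 + n2 \<le> (l3 + l4) + min (l2 + l3) (l1 + l4)
          \<longrightarrow> kron [m1, m2] [n1, n2] [l1, l2, l3, l4] = atomic_kron [m1, m2] [n1, n2] [l1, l2, l3, l4])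
       \<and> (l2 + l3 \<le> l1 + l4
          \<and> int l4 \<le> int m2 + int n2 - int (l2 + l3 + l4)
          \<and> int m2 + int n2 - int (l2 + l3 + l4) \<le> int l3
          \<and> int l3 \<le> int n2 - int l4
          \<and> int n2 - int l4 \<le> int l2
          \<longrightarrow> kron [m1, m2] [n1, n2] [l1, l2, l3, l4] = atomic_kron [m1, m2] [n1, n2] [l1, l2, l3, l4])"
proof -
  interpret four_row_shape l1 l2 l3 l4 using lam_part by unfold_locales
  have in_region: "kron [m1, m2] [n1, n2] [l1, l2, l3, l4] = atomic_kron [m1, m2] [n1, n2] [l1, l2, l3, l4]"
    if "l3 + l4 \<le> n2 \<and> n2 \<le> l2 + l4 \<and> (l3 + l4) + (l2 + l4) \<le> m2 + n2
      \<and> m2 + n2 \<le> (l3 + l4) + min (l2 + l3) (l1 + l4)"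
  proof -
    have "kron [m1, m2] [n1, n2] [l1, l2, l3, l4] = kron_family lam m2 n2" by (simp add: kron_def)
    also have "\<dots> = int (pS (int n2 - int l3 - int l4) (int m2 + int n2 - int l2 - int l3 - 2 * int l4))"
      using that mu_nu mu_part weight_mu by (intro kron_family_eq_pS) auto
    also have "\<dots> = atomic_kron [m1, m2] [n1, n2] [l1, l2, l3, l4]"
      by (simp add: atomic_kron_def numeral_eq_Suc)
    finally show ?thesis .
  qed
  show ?thesis
    using in_region by (auto simp: min_def)
qed

end
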